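(* Let $k \ge 2$, $n \ge 1$ and $d \ge 1$ be integers, and let $f:[2k]^n \to \mathbb{R}^d$ satisfy $\|f(x_1,\ldots,x_n)\|_1 \le 1$ for all $x_1,\ldots,x_n \in [2k]$. For $0 \le \ell \le n$ and $x_1,\ldots,x_\ell \in [2k]$, let $f(x_1,\ldots,x_\ell)$ denote the average of $f(x_1,\ldots,x_n)$ over $x_{\ell+1},\ldots,x_n$ chosen uniformly and independently in $[2k]$. Suppose that for some $\varepsilon < 1/(k-1)$ the following holds for all $\ell \in [n]$, all $x_1,\ldots,x_{\ell-1} \in [2k]$ and all $r \in [k-1]$: $$\frac{1}{2k} \left\| \sum_{b=1}^r \bigl(f(x_1,\ldots,x_{\ell-1},b) + f(x_1,\ldots,x_{\ell-1},b+k)\bigr) - \sum_{b=r+1}^k \bigl(f(x_1,\ldots,x_{\ell-1},b) + f(x_1,\ldots,x_{\ell-1},b+k)\bigr) \right\|_1 \ge 1-\varepsilon.$$ Let $\delta := (k-1)\varepsilon/2$ (so $\delta < 1/2$). Then $$ d \ge 2^{(\log k - \delta \log (k-1) - H(\delta))n - 1} - \frac{1}{2}.$$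
   Context: $[m]$ denotes $\{1,\ldots,m\}$. All logarithms are base $2$. $H(\delta) := -\delta \log \delta - (1-\delta)\log(1-\delta)$ is the binary entropy function (with $0\log 0 = 0$). $\|\cdot\|_1$ is the $\ell_1$ norm on $\mathbb{R}^d$. *)

theory Defs
  imports "HOL-Analysis.Analysis"
begin

definition tuples :: "nat \<Rightarrow> nat \<Rightarrow> nat list set" where
  "tuples m j = {ys. length ys = j \<and> set ys \<subseteq> {1..m}}"

text \<open>The l1 norm on R^d (d = CARD('d)).\<close>
definition l1norm :: "real ^ 'd \<Rightarrow> real" where
  "l1norm v = (\<Sum>i\<in>UNIV. \<bar>v $ i\<bar>)"

definition partial_avg :: "nat \<Rightarrow> nat \<Rightarrow> (nat list \<Rightarrow> real ^ 'd) \<Rightarrow> nat list \<Rightarrow> real ^ 'd" where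
  "partial_avg k n f xs =
     (1 / real (card (tuples (2*k) (n - length xs)))) *\<^sub>R
       (\<Sum>ys\<in>tuples (2*k) (n - length xs). f (xs @ ys))"

definition bin_entropy :: "real \<Rightarrow> real" where
  "bin_entropy \<delta> = (if \<delta> = 0 then 0 else - \<delta> * log 2 \<delta>)
                    + (if \<delta> = 1 then 0 else - (1 - \<delta>) * log 2 (1 - \<delta>))"

end

theory Submission
  imports Defs
begin

text \<open>Each value \<open>f x\<close> is the mean of a probability distribution \<open>owner_weight (f x)\<close> on the
  \<open>2d + 1\<close> owners \<open>0, \<plusminus>e\<^sub>c\<close>. At a node of the \<open>2k\<close>-ary tree, merge the children \<open>b\<close> and
  \<open>b + k\<close> into \<open>k\<close> pairs: the hypothesis, applied to all \<open>k - 1\<close> splits of the pairs, forces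
  the mass of every owner onto a single preferred pair up to a total loss of \<open>k\<delta>\<close>. So a leaf drawn
  together with one of its owners leaves the preferred pairs of that owner at only \<open>\<delta>n\<close> levels on
  average. For a fixed owner, on the other hand, weighting each leaf by \<open>\<theta>\<close> to the number of such
  misses gives total weight \<open>(2 + 2(k - 1)\<theta>)\<^sup>n\<close>. Convexity of \<open>D \<mapsto> \<theta>\<^sup>D\<close> combines the two into
  \<open>(2k)\<^sup>n \<theta>\<^bsup>\<delta>n\<^esup> \<le> (2d + 1)(2 + 2(k - 1)\<theta>)\<^sup>n\<close>, and the optimal \<open>\<theta>\<close> yields the entropy bound.\<close>

lemma tuples_0 [simp]: "tuples m 0 = {[]}"
  by (auto simp: tuples_def)

lemma tuples_Suc: "tuples m (Suc j) = (\<lambda>(a, ys). a # ys) ` ({1..m} \<times> tuples m j)"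
proof (rule set_eqI)
  fix x
  show "x \<in> tuples m (Suc j) \<longleftrightarrow> x \<in> (\<lambda>(a, ys). a # ys) ` ({1..m} \<times> tuples m j)"
    by (cases x) (auto simp: tuples_def image_iff)
qed

lemma finite_tuples [simp]: "finite (tuples m j)"
  by (induction j) (auto simp: tuples_Suc)

lemma inj_on_Cons_pair: "inj_on (\<lambda>(a, ys). a # ys) A"
  by (auto simp: inj_on_def)

lemma card_tuples [simp]: "card (tuples m j) = m ^ j"
proof (induction j)
  case (Suc j)
  have "card (tuples m (Suc j)) = card ({1..m} \<times> tuples m j)"
    unfolding tuples_Suc by (rule card_image[OF inj_on_Cons_pair])
  with Suc show ?case
    by (simp add: card_cartesian_product)
qed simp

lemma length_tuples: "xs \<in> tuples m j \<Longrightarrow> length xs = j"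
  by (simp add: tuples_def)

lemma append_in_tuples: "xs \<in> tuples m i \<Longrightarrow> ys \<in> tuples m j \<Longrightarrow> xs @ ys \<in> tuples m (i + j)"
  by (auto simp: tuples_def)

lemma snoc_in_tuples: "xs \<in> tuples m j \<Longrightarrow> a \<in> {1..m} \<Longrightarrow> xs @ [a] \<in> tuples m (Suc j)"
  by (auto simp: tuples_def)

lemma sum_tuples_Suc:
  "(\<Sum>x\<in>tuples m (Suc j). F x) = (\<Sum>a\<in>{1..m}. \<Sum>ys\<in>tuples m j. F (a # ys))"
proof -
  have "(\<Sum>x\<in>tuples m (Suc j). F x) = (\<Sum>(a, ys)\<in>{1..m} \<times> tuples m j. F (a # ys))"
    unfolding tuples_Suc
    by (simp only: sum.reindex[OF inj_on_Cons_pair] comp_def) (rule sum.cong, auto)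
  then show ?thesis
    by (simp add: sum.cartesian_product)
qed

lemma sum_tuples_add:
  "(\<Sum>x\<in>tuples m (i + j). F x) = (\<Sum>xs\<in>tuples m i. \<Sum>ys\<in>tuples m j. F (xs @ ys))"
  by (induction i arbitrary: F) (simp_all add: sum_tuples_Suc)

lemma sum_off_pair:
  fixes h :: "nat \<Rightarrow> 'a::ab_group_add"
  assumes "b0 \<in> {1..k}"
  shows "(\<Sum>a\<in>{1..2*k}. if a \<in> {b0, b0 + k} then 0 else h a)
       = (\<Sum>b\<in>{1..k}. h b + h (b + k)) - (h b0 + h (b0 + k))"
proof -
  have pair: "{b0, b0 + k} \<subseteq> {1..2*k}" "b0 \<noteq> b0 + k"
    using assms by auto
  have "(\<Sum>a\<in>{1..2*k}. if a \<in> {b0, b0 + k} then 0 else h a) = sum h ({1..2*k} - {b0, b0 + k})"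
    by (simp add: sum.If_cases Diff_eq del: insert_iff)
  also have "\<dots> = sum h {1..k + k} - (h b0 + h (b0 + k))"
    using pair by (simp add: sum_diff mult_2)
  also have "sum h {1..k + k} = (\<Sum>b\<in>{1..k}. h b + h (b + k))"
    using sum.ub_add_nat[of 1 k h k] sum.shift_bounds_cl_nat_ivl[of h 1 k k]
    by (simp add: sum.distrib add.commute)
  finally show ?thesis .
qed

lemma sum_skip_index:
  fixes P :: "nat \<Rightarrow> 'a::comm_monoid_add"
  assumes "1 \<le> m" "m \<le> k"
  shows "(\<Sum>r\<in>{1..k-1}. P (if r < m then r else r + 1)) + P m = sum P {1..k}"
  using assms(2)
proof (induction k rule: dec_induct)
  case base
  have "(\<Sum>r\<in>{1..m-1}. P (if r < m then r else r + 1)) = sum P {1..m-1}"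
    by (rule sum.cong) auto
  moreover have "{1..m} = insert m {1..m-1}" "m \<notin> {1..m-1}"
    using assms(1) by auto
  ultimately show ?case
    by (simp add: add.commute)
next
  case (step k)
  have "{1..Suc k - 1} = insert k {1..k-1}" "k \<notin> {1..k-1}"
    using step assms(1) by auto
  then have "(\<Sum>r\<in>{1..Suc k - 1}. P (if r < m then r else r + 1)) + P m
      = P (Suc k) + ((\<Sum>r\<in>{1..k-1}. P (if r < m then r else r + 1)) + P m)"
    using step by (simp add: add.assoc)
  also have "\<dots> = sum P {1..Suc k}"
    using step.IH by (simp add: add.commute)
  finally show ?case .
qed

lemma sum_minus_max_le_sum_min_splits:
  fixes P :: "nat \<Rightarrow> real"
  assumes nonneg: "\<And>b. b \<in> {1..k} \<Longrightarrow> 0 \<le> P b"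
    and m: "m \<in> {1..k}" and max: "\<And>b. b \<in> {1..k} \<Longrightarrow> P b \<le> P m"
  shows "sum P {1..k} - P m \<le> (\<Sum>r\<in>{1..k-1}. min (sum P {1..r}) (sum P {r+1..k}))"
proof -
  have le_sum: "P i \<le> sum P A" if "i \<in> A" "A \<subseteq> {1..k}" "finite A" for i A
    using that nonneg by (intro member_le_sum) auto
  have "P (if r < m then r else r + 1) \<le> min (sum P {1..r}) (sum P {r+1..k})"
    if r: "r \<in> {1..k-1}" for r
  proof (cases "r < m")
    case True
    then have "P r \<le> sum P {1..r}" "P r \<le> P m" "P m \<le> sum P {r+1..k}"
      using r m max by (auto intro: le_sum)
    with True show ?thesis
      by simp
  next
    case False
    then have "P (r + 1) \<le> P m" "P m \<le> sum P {1..r}" "P (r + 1) \<le> sum P {r+1..k}"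
      using r m max by (auto intro!: le_sum)
    with False show ?thesis
      by simp
  qed
  then have "(\<Sum>r\<in>{1..k-1}. P (if r < m then r else r + 1))
      \<le> (\<Sum>r\<in>{1..k-1}. min (sum P {1..r}) (sum P {r+1..k}))"
    by (rule sum_mono)
  then show ?thesis
    using sum_skip_index[of m k P] m by simp
qed

lemma two_min_add_two_min_le:
  fixes a1 a2 b1 b2 :: real
  shows "2 * min a1 a2 + 2 * min b1 b2 \<le> a1 + a2 + b1 + b2 - \<bar>(a1 - b1) - (a2 - b2)\<bar>"
  by (simp add: min_def abs_if)

lemma split_pos_neg_loss_le:
  fixes P N :: "nat \<Rightarrow> real"
  assumes "\<And>b. b \<in> {1..k} \<Longrightarrow> 0 \<le> P b" "m \<in> {1..k}" "\<And>b. b \<in> {1..k} \<Longrightarrow> P b \<le> P m"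
    and "\<And>b. b \<in> {1..k} \<Longrightarrow> 0 \<le> N b" "m' \<in> {1..k}" "\<And>b. b \<in> {1..k} \<Longrightarrow> N b \<le> N m'"
  shows "2 * ((sum P {1..k} - P m) + (sum N {1..k} - N m')) \<le>
    (\<Sum>r\<in>{1..k-1}. (\<Sum>b\<in>{1..k}. P b + N b)
        - \<bar>(\<Sum>b\<in>{1..r}. P b - N b) - (\<Sum>b\<in>{r+1..k}. P b - N b)\<bar>)"
proof -
  have "2 * min (sum P {1..r}) (sum P {r+1..k}) + 2 * min (sum N {1..r}) (sum N {r+1..k})
     \<le> (\<Sum>b\<in>{1..k}. P b + N b) - \<bar>(\<Sum>b\<in>{1..r}. P b - N b) - (\<Sum>b\<in>{r+1..k}. P b - N b)\<bar>"
    if "r \<in> {1..k-1}" for r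
  proof -
    have "r + (k - r) = k"
      using that by auto
    then have "(\<Sum>b\<in>{1..k}. P b + N b) = sum P {1..r} + sum P {r+1..k} + sum N {1..r} + sum N {r+1..k}"
      using sum.ub_add_nat[of 1 r "\<lambda>b. P b + N b" "k - r"] by (simp add: sum.distrib)
    then show ?thesis
      using two_min_add_two_min_le by (simp add: sum_subtractf)
  qed
  then have "(\<Sum>r\<in>{1..k-1}. 2 * min (sum P {1..r}) (sum P {r+1..k}) + 2 * min (sum N {1..r}) (sum N {r+1..k}))
     \<le> (\<Sum>r\<in>{1..k-1}. (\<Sum>b\<in>{1..k}. P b + N b)
        - \<bar>(\<Sum>b\<in>{1..r}. P b - N b) - (\<Sum>b\<in>{r+1..k}. P b - N b)\<bar>)"
    by (rule sum_mono)
  moreover have "2 * ((sum P {1..k} - P m) + (sum N {1..k} - N m'))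
     \<le> 2 * (\<Sum>r\<in>{1..k-1}. min (sum P {1..r}) (sum P {r+1..k}))
       + 2 * (\<Sum>r\<in>{1..k-1}. min (sum N {1..r}) (sum N {r+1..k}))"
  proof -
    have "sum P {1..k} - P m \<le> (\<Sum>r\<in>{1..k-1}. min (sum P {1..r}) (sum P {r+1..k}))"
      "sum N {1..k} - N m' \<le> (\<Sum>r\<in>{1..k-1}. min (sum N {1..r}) (sum N {r+1..k}))"
      by (rule sum_minus_max_le_sum_min_splits; use assms in blast)+
    then show ?thesis
      by argo
  qed
  moreover have "2 * (\<Sum>r\<in>{1..k-1}. min (sum P {1..r}) (sum P {r+1..k}))
       + 2 * (\<Sum>r\<in>{1..k-1}. min (sum N {1..r}) (sum N {r+1..k}))
     = (\<Sum>r\<in>{1..k-1}. 2 * min (sum P {1..r}) (sum P {r+1..k}) + 2 * min (sum N {1..r}) (sum N {r+1..k}))"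
    by (simp add: sum.distrib sum_distrib_left)
  ultimately show ?thesis
    by linarith
qed

text \<open>\<open>None\<close> stands for the vector \<open>0\<close>, \<open>Some (c, True)\<close> for \<open>e\<^sub>c\<close> and \<open>Some (c, False)\<close>
  for \<open>-e\<^sub>c\<close>; if \<open>l1norm v \<le> 1\<close>, then \<open>owner_weight v\<close> is a probability distribution on the
  owners with mean \<open>v\<close>.\<close>
type_synonym 'd owner = "('d \<times> bool) option"

definition owner_weight :: "real ^ 'd \<Rightarrow> 'd owner \<Rightarrow> real" where
  "owner_weight v q = (case q of
      None \<Rightarrow> 1 - l1norm v
    | Some (c, s) \<Rightarrow> if s then max (v $ c) 0 else max (- v $ c) 0)"

lemma sum_UNIV_owner:
  fixes g :: "'d::finite owner \<Rightarrow> 'a::comm_monoid_add"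
  shows "(\<Sum>q\<in>UNIV. g q) = g None + (\<Sum>c\<in>UNIV. g (Some (c, True)) + g (Some (c, False)))"
proof -
  have "(\<Sum>q\<in>UNIV. g q) = g None + (\<Sum>cs\<in>UNIV. g (Some cs))"
    unfolding UNIV_option_conv by (simp add: sum.reindex)
  also have "(\<Sum>cs\<in>UNIV. g (Some cs)) = (\<Sum>c\<in>UNIV. \<Sum>s\<in>UNIV. g (Some (c, s)))"
    by (simp add: sum.cartesian_product flip: UNIV_Times_UNIV)
  finally show ?thesis
    by (simp add: UNIV_bool add.commute)
qed

lemma l1norm_nonneg: "0 \<le> l1norm v"
  by (simp add: l1norm_def sum_nonneg)

lemma abs_nth_le_l1norm: "\<bar>v $ c\<bar> \<le> l1norm v"
  unfolding l1norm_def by (rule member_le_sum) auto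

lemma owner_weight_nonneg: "l1norm v \<le> 1 \<Longrightarrow> 0 \<le> owner_weight v q"
  by (auto simp: owner_weight_def split: option.splits)

lemma owner_weight_le_1:
  assumes "l1norm v \<le> 1"
  shows "owner_weight v q \<le> 1"
proof -
  have "\<bar>v $ c\<bar> \<le> 1" for c
    using abs_nth_le_l1norm[of v c] assms by linarith
  then show ?thesis
    using l1norm_nonneg[of v] by (auto simp: owner_weight_def abs_le_iff split: option.splits)
qed

lemma sum_owner_weight: "(\<Sum>q\<in>UNIV. owner_weight v q) = 1"
proof -
  have "(\<Sum>c\<in>UNIV. owner_weight v (Some (c, True)) + owner_weight v (Some (c, False))) = l1norm v"
    unfolding l1norm_def by (rule sum.cong) (auto simp: owner_weight_def)
  then show ?thesis
    by (simp add: sum_UNIV_owner owner_weight_def)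
qed

lemma nth_eq_owner_weight_diff: "v $ c = owner_weight v (Some (c, True)) - owner_weight v (Some (c, False))"
  by (auto simp: owner_weight_def)

text \<open>For each split \<open>r\<close>, the mass of owner \<open>\<plusminus>e\<^sub>c\<close> on the lighter side of the split is lost
  in the hypothesis; over the \<open>k - 1\<close> splits these lighter sides cover every pair except the
  heaviest one.\<close>
lemma split_loss_bound:
  fixes p :: "nat \<Rightarrow> 'd::finite owner \<Rightarrow> real" and best :: "'d owner \<Rightarrow> nat"
  assumes k: "k \<ge> 2"
    and nonneg: "\<And>b q. b \<in> {1..k} \<Longrightarrow> 0 \<le> p b q"
    and total: "\<And>b. b \<in> {1..k} \<Longrightarrow> (\<Sum>q\<in>UNIV. p b q) = 1"
    and best_in: "\<And>q. best q \<in> {1..k}"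
    and best_max: "\<And>b q. b \<in> {1..k} \<Longrightarrow> p b q \<le> p (best q) q"
    and split: "\<And>r. r \<in> {1..k-1} \<Longrightarrow> real k * (1 - \<epsilon>) \<le>
       (\<Sum>c\<in>UNIV. \<bar>(\<Sum>b\<in>{1..r}. p b (Some (c, True)) - p b (Some (c, False)))
                 - (\<Sum>b\<in>{r+1..k}. p b (Some (c, True)) - p b (Some (c, False)))\<bar>)"
  shows "(\<Sum>q\<in>UNIV. (\<Sum>b\<in>{1..k}. p b q) - p (best q) q) \<le> real k * ((real k - 1) * \<epsilon> / 2)"
proof -
  define loss where "loss q = (\<Sum>b\<in>{1..k}. p b q) - p (best q) q" for q
  define zero_mass where "zero_mass = (\<Sum>b\<in>{1..k}. p b None)"
  define signed_mass where "signed_mass c = (\<Sum>b\<in>{1..k}. p b (Some (c, True)) + p b (Some (c, False)))" for c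
  define gap where "gap r c = \<bar>(\<Sum>b\<in>{1..r}. p b (Some (c, True)) - p b (Some (c, False)))
                 - (\<Sum>b\<in>{r+1..k}. p b (Some (c, True)) - p b (Some (c, False)))\<bar>" for r c
  have "real k = (\<Sum>b\<in>{1..k}. \<Sum>q\<in>UNIV. p b q)"
    using total by simp
  also have "\<dots> = (\<Sum>q\<in>UNIV. \<Sum>b\<in>{1..k}. p b q)"
    by (rule sum.swap)
  also have "\<dots> = zero_mass + (\<Sum>c\<in>UNIV. signed_mass c)"
    unfolding zero_mass_def signed_mass_def by (simp add: sum_UNIV_owner sum.distrib)
  finally have mass: "(\<Sum>c\<in>UNIV. signed_mass c) = real k - zero_mass"
    by simp
  have "2 * (\<Sum>c\<in>UNIV. loss (Some (c, True)) + loss (Some (c, False)))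
      \<le> (\<Sum>c\<in>UNIV. \<Sum>r\<in>{1..k-1}. signed_mass c - gap r c)"
    unfolding sum_distrib_left loss_def signed_mass_def gap_def
    by (intro sum_mono split_pos_neg_loss_le) (use nonneg best_in best_max in auto)
  also have "\<dots> = (\<Sum>r\<in>{1..k-1}. \<Sum>c\<in>UNIV. signed_mass c - gap r c)"
    by (rule sum.swap)
  also have "\<dots> = (\<Sum>r\<in>{1..k-1}. (real k - zero_mass) - (\<Sum>c\<in>UNIV. gap r c))"
    by (simp only: sum_subtractf mass)
  also have "\<dots> \<le> (\<Sum>r\<in>{1..k-1}. (real k - zero_mass) - real k * (1 - \<epsilon>))"
    unfolding gap_def by (intro sum_mono diff_left_mono split) simp
  also have "\<dots> = (real k - 1) * (real k * \<epsilon> - zero_mass)"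
    using k by (simp add: of_nat_diff algebra_simps)
  finally have signed_loss: "(\<Sum>c\<in>UNIV. loss (Some (c, True)) + loss (Some (c, False)))
      \<le> (real k - 1) * (real k * \<epsilon> - zero_mass) / 2"
    by simp
  have "zero_mass \<le> real k * p (best None) None"
    unfolding zero_mass_def using sum_bounded_above[of "{1..k}" "\<lambda>b. p b None"] best_max by simp
  then have "loss None \<le> zero_mass - zero_mass / real k"
    using k unfolding loss_def zero_mass_def[symmetric] by (simp add: field_simps)
  also have "\<dots> = (real k - 1) * zero_mass / real k"
    using k by (simp add: field_simps)
  also have "\<dots> \<le> (real k - 1) * zero_mass / 2"
    using k nonneg unfolding zero_mass_def by (intro divide_left_mono mult_nonneg_nonneg sum_nonneg) auto
  finally have zero_loss: "loss None \<le> (real k - 1) * zero_mass / 2" .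
  have "(\<Sum>q\<in>UNIV. loss q) \<le> real k * ((real k - 1) * \<epsilon> / 2)"
    using signed_loss zero_loss by (simp add: sum_UNIV_owner algebra_simps)
  then show ?thesis
    by (simp add: loss_def)
qed

definition pair_misses :: "nat \<Rightarrow> (nat list \<Rightarrow> nat) \<Rightarrow> nat list \<Rightarrow> nat" where
  "pair_misses k pref x =
     (\<Sum>l<length x. if x ! l \<in> {pref (take l x), pref (take l x) + k} then 0 else 1)"

lemma pair_misses_Cons:
  "pair_misses k pref (a # ys)
     = (if a \<in> {pref [], pref [] + k} then 0 else 1) + pair_misses k (\<lambda>zs. pref (a # zs)) ys"
  unfolding pair_misses_def length_Cons by (subst sum.lessThan_Suc_shift) (simp del: insert_iff)

lemma sum_power_pair_misses:
  fixes \<theta> :: real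
  assumes "\<And>ys. pref ys \<in> {1..k}"
  shows "(\<Sum>x\<in>tuples (2*k) j. \<theta> ^ pair_misses k pref x) = (2 + 2 * (real k - 1) * \<theta>) ^ j"
  using assms
proof (induction j arbitrary: pref)
  case 0
  then show ?case
    by (simp add: pair_misses_def)
next
  case (Suc j)
  have "(\<Sum>a\<in>{1..2*k}. \<theta> ^ (if a \<in> {pref [], pref [] + k} then 0 else 1)) = 2 + 2 * (real k - 1) * \<theta>"
  proof -
    have "(\<Sum>a\<in>{1..2*k}. \<theta> ^ (if a \<in> {pref [], pref [] + k} then 0 else 1))
        = (\<Sum>a\<in>{1..2*k}. (if a \<in> {pref [], pref [] + k} then 0 else \<theta> - 1) + 1)"
      by (rule sum.cong) auto
    also have "\<dots> = 2 * real k * (\<theta> - 1) - 2 * (\<theta> - 1) + 2 * real k"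
      using sum_off_pair[OF Suc.prems[of "[]"], of "\<lambda>_. \<theta> - 1"] by (simp add: sum.distrib del: insert_iff)
    finally show ?thesis
      by (simp add: algebra_simps)
  qed
  then show ?case
    using Suc by (simp add: sum_tuples_Suc pair_misses_Cons power_add sum_distrib_left[symmetric]
        sum_distrib_right[symmetric] del: insert_iff)
qed

text \<open>Jensen's inequality for the convex function \<open>D \<mapsto> \<theta>\<^sup>D\<close>, via its tangent at the mean \<open>m\<close>.\<close>
lemma weighted_power_ge_powr:
  fixes w :: "'a \<Rightarrow> real" and D :: "'a \<Rightarrow> nat"
  assumes "finite A" and w: "\<And>a. a \<in> A \<Longrightarrow> 0 \<le> w a" and \<theta>: "0 < \<theta>" "\<theta> \<le> 1"
    and mean: "(\<Sum>a\<in>A. w a * D a) \<le> m * (\<Sum>a\<in>A. w a)"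
  shows "\<theta> powr m * (\<Sum>a\<in>A. w a) \<le> (\<Sum>a\<in>A. w a * \<theta> ^ D a)"
proof -
  define L where "L = ln \<theta>"
  have L: "L \<le> 0"
    using \<theta> by (simp add: L_def)
  have tangent: "\<theta> powr m * (1 + (real (D a) - m) * L) \<le> \<theta> ^ D a" for a
  proof -
    have "\<theta> powr m * (1 + (real (D a) - m) * L) \<le> \<theta> powr m * exp ((real (D a) - m) * L)"
      by (intro mult_left_mono exp_ge_add_one_self) simp
    also have "\<dots> = exp (m * L + (real (D a) - m) * L)"
      using \<theta> by (simp add: L_def powr_def exp_add)
    also have "\<dots> = exp (real (D a) * L)"
      by (simp add: algebra_simps)
    also have "\<dots> = \<theta> ^ D a"
      using \<theta> by (simp add: L_def exp_of_nat_mult)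
    finally show ?thesis .
  qed
  have "\<theta> powr m * (\<Sum>a\<in>A. w a) \<le> \<theta> powr m * ((\<Sum>a\<in>A. w a) + L * ((\<Sum>a\<in>A. w a * D a) - m * (\<Sum>a\<in>A. w a)))"
    using L mean by (intro mult_left_mono) (auto simp: mult_nonpos_nonpos)
  also have "\<dots> = (\<Sum>a\<in>A. w a * (\<theta> powr m * (1 + (real (D a) - m) * L)))"
    by (simp add: algebra_simps sum.distrib sum_distrib_left sum_distrib_right sum_subtractf)
  also have "\<dots> \<le> (\<Sum>a\<in>A. w a * \<theta> ^ D a)"
    using w tangent by (intro sum_mono mult_left_mono) auto
  finally show ?thesis .
qed

text \<open>This \<open>\<theta>\<close> minimises \<open>(2 + 2(K - 1)\<theta>)\<^sup>n / \<theta>\<^bsup>dn\<^esup>\<close>.\<close>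
lemma entropy_exponent_identity:
  fixes K d :: real
  assumes K: "2 \<le> K" and d: "0 < d" "d < 1 / 2"
  defines "\<theta> \<equiv> d / ((1 - d) * (K - 1))"
  shows "0 < \<theta>" and "\<theta> \<le> 1"
    and "2 + 2 * (K - 1) * \<theta> = 2 / (1 - d)"
    and "2 powr ((log 2 K - d * log 2 (K - 1) - bin_entropy d) * real n) * (2 / (1 - d)) ^ n
       = (2 * K) ^ n * \<theta> powr (real n * d)"
proof -
  show \<theta>_pos: "0 < \<theta>"
    using K d by (simp add: \<theta>_def)
  have "1 - d \<le> (1 - d) * (K - 1)"
    using mult_left_mono[of 1 "K - 1" "1 - d"] K d by simp
  then have "d \<le> (1 - d) * (K - 1)"
    using d by linarith
  then show "\<theta> \<le> 1"
    using K d by (simp add: \<theta>_def pos_divide_le_eq)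
  have "(K - 1) * \<theta> = d / (1 - d)"
    using K by (simp add: \<theta>_def)
  then show "2 + 2 * (K - 1) * \<theta> = 2 / (1 - d)"
    using d by (simp add: mult.assoc field_simps)
  have H: "bin_entropy d = - d * log 2 d - (1 - d) * log 2 (1 - d)"
    using d by (simp add: bin_entropy_def algebra_simps)
  have "ln (2 powr ((log 2 K - d * log 2 (K - 1) - bin_entropy d) * real n) * (2 / (1 - d)) ^ n)
      = real n * (ln K - d * ln (K - 1) + d * ln d + (1 - d) * ln (1 - d) + ln 2 - ln (1 - d))"
    using K d by (simp add: H ln_mult ln_realpow ln_div log_def field_simps)
  also have "\<dots> = ln ((2 * K) ^ n * \<theta> powr (real n * d))"
  proof -
    have ln_\<theta>: "ln \<theta> = ln d - ln (1 - d) - ln (K - 1)"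
      using K d by (simp add: \<theta>_def ln_div ln_mult)
    show ?thesis
      using K \<theta>_pos by (simp add: ln_mult ln_realpow ln_powr ln_\<theta> algebra_simps)
  qed
  finally show "2 powr ((log 2 K - d * log 2 (K - 1) - bin_entropy d) * real n) * (2 / (1 - d)) ^ n
      = (2 * K) ^ n * \<theta> powr (real n * d)"
    using K d by (simp add: \<theta>_def)
qed

lemma arg_max_on_finite:
  fixes f :: "'a \<Rightarrow> 'b::linorder"
  assumes "finite S" "S \<noteq> {}"
  shows "arg_max_on f S \<in> S \<and> (\<forall>x\<in>S. f x \<le> f (arg_max_on f S))"
proof -
  have "Max (f ` S) \<in> f ` S"
    using assms by simp
  then obtain m where m: "m \<in> S" "f m = Max (f ` S)"
    by (auto simp del: Max_in)
  then have max: "\<forall>x\<in>S. f x \<le> f m"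
    using assms by simp
  show ?thesis
    unfolding arg_max_on_def
    by (rule arg_maxI[where P = "\<lambda>x. x \<in> S" and x = m]) (use m(1) max in \<open>auto simp: not_less\<close>)
qed

locale pair_splitting =
  fixes k n :: nat and \<epsilon> :: real and f :: "nat list \<Rightarrow> real ^ 'd"
  assumes k_ge_2: "k \<ge> 2"
    and bounded: "\<And>xs. xs \<in> tuples (2*k) n \<Longrightarrow> l1norm (f xs) \<le> 1"
    and split: "\<And>l xs r. l \<in> {1..n} \<Longrightarrow> xs \<in> tuples (2*k) (l - 1) \<Longrightarrow> r \<in> {1..k-1} \<Longrightarrow>
       1 / (2 * real k) * l1norm
         ((\<Sum>b\<in>{1..r}. partial_avg k n f (xs @ [b]) + partial_avg k n f (xs @ [b + k]))
          - (\<Sum>b\<in>{r+1..k}. partial_avg k n f (xs @ [b]) + partial_avg k n f (xs @ [b + k])))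
       \<ge> 1 - \<epsilon>"
begin

abbreviation \<delta> :: real where
  "\<delta> \<equiv> (real k - 1) * \<epsilon> / 2"

definition owner_avg :: "nat list \<Rightarrow> 'd owner \<Rightarrow> real" where
  "owner_avg xs q =
     (\<Sum>ys\<in>tuples (2*k) (n - length xs). owner_weight (f (xs @ ys)) q)
       / real (card (tuples (2*k) (n - length xs)))"

definition pair_avg :: "nat list \<Rightarrow> nat \<Rightarrow> 'd owner \<Rightarrow> real" where
  "pair_avg xs b q = (owner_avg (xs @ [b]) q + owner_avg (xs @ [b + k]) q) / 2"

definition best_pair :: "nat list \<Rightarrow> 'd owner \<Rightarrow> nat" where
  "best_pair xs q = arg_max_on (\<lambda>b. pair_avg xs b q) {1..k}"

definition level_loss :: "nat list \<Rightarrow> real" where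
  "level_loss xs = (\<Sum>q\<in>UNIV. (\<Sum>b\<in>{1..k}. pair_avg xs b q) - pair_avg xs (best_pair xs q) q)"

lemma best_pair_in: "best_pair xs q \<in> {1..k}"
  and pair_avg_le_best_pair: "b \<in> {1..k} \<Longrightarrow> pair_avg xs b q \<le> pair_avg xs (best_pair xs q) q"
  using arg_max_on_finite[of "{1..k}" "\<lambda>b. pair_avg xs b q"] k_ge_2 by (auto simp: best_pair_def)

lemma owner_avg_nonneg:
  assumes "xs \<in> tuples (2*k) l" "l \<le> n"
  shows "0 \<le> owner_avg xs q"
proof -
  have "0 \<le> owner_weight (f (xs @ ys)) q" if "ys \<in> tuples (2*k) (n - length xs)" for ys
    using append_in_tuples[OF assms(1) that] assms by (intro owner_weight_nonneg bounded) (simp add: length_tuples)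
  then show ?thesis
    unfolding owner_avg_def by (simp add: sum_nonneg)
qed

lemma sum_owner_avg: "(\<Sum>q\<in>UNIV. owner_avg xs q) = 1"
proof -
  have "(\<Sum>q\<in>UNIV. \<Sum>ys\<in>tuples (2*k) (n - length xs). owner_weight (f (xs @ ys)) q)
      = (\<Sum>ys\<in>tuples (2*k) (n - length xs). \<Sum>q\<in>UNIV. owner_weight (f (xs @ ys)) q)"
    by (rule sum.swap)
  then have "(\<Sum>q\<in>UNIV. \<Sum>ys\<in>tuples (2*k) (n - length xs). owner_weight (f (xs @ ys)) q)
      = real (card (tuples (2*k) (n - length xs)))"
    by (simp add: sum_owner_weight)
  then show ?thesis
    using k_ge_2 by (simp add: owner_avg_def flip: sum_divide_distrib)
qed

lemma partial_avg_nth: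
  "partial_avg k n f xs $ c = owner_avg xs (Some (c, True)) - owner_avg xs (Some (c, False))"
proof -
  have "(\<Sum>ys\<in>tuples (2*k) (n - length xs). f (xs @ ys) $ c)
      = (\<Sum>ys\<in>tuples (2*k) (n - length xs).
           owner_weight (f (xs @ ys)) (Some (c, True)) - owner_weight (f (xs @ ys)) (Some (c, False)))"
    by (rule sum.cong[OF refl nth_eq_owner_weight_diff])
  then show ?thesis
    unfolding partial_avg_def owner_avg_def by (simp add: sum_subtractf diff_divide_distrib)
qed

lemma level_loss_le:
  assumes xs: "xs \<in> tuples (2*k) l" and "l < n"
  shows "level_loss xs \<le> real k * \<delta>"
  unfolding level_loss_def
proof (rule split_loss_bound)
  show "2 \<le> k" "best_pair xs q \<in> {1..k}" for q
    by (rule k_ge_2 best_pair_in)+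
  show "pair_avg xs b q \<le> pair_avg xs (best_pair xs q) q" if "b \<in> {1..k}" for b q
    using that by (rule pair_avg_le_best_pair)
  have children: "xs @ [b] \<in> tuples (2*k) (Suc l)" "xs @ [b + k] \<in> tuples (2*k) (Suc l)"
    if "b \<in> {1..k}" for b
    using that by (auto intro: snoc_in_tuples[OF xs])
  show "0 \<le> pair_avg xs b q" if "b \<in> {1..k}" for b q
    using owner_avg_nonneg[OF children(1)[OF that]] owner_avg_nonneg[OF children(2)[OF that]] \<open>l < n\<close>
    by (simp add: pair_avg_def)
  show "(\<Sum>q\<in>UNIV. pair_avg xs b q) = 1" for b
    by (simp add: pair_avg_def sum.distrib sum_owner_avg flip: sum_divide_distrib)
  show "real k * (1 - \<epsilon>) \<le> (\<Sum>c\<in>UNIV.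
      \<bar>(\<Sum>b\<in>{1..r}. pair_avg xs b (Some (c, True)) - pair_avg xs b (Some (c, False)))
       - (\<Sum>b\<in>{r+1..k}. pair_avg xs b (Some (c, True)) - pair_avg xs b (Some (c, False)))\<bar>)"
    if r: "r \<in> {1..k-1}" for r
  proof -
    let ?V = "(\<Sum>b\<in>{1..r}. partial_avg k n f (xs @ [b]) + partial_avg k n f (xs @ [b + k]))
          - (\<Sum>b\<in>{r+1..k}. partial_avg k n f (xs @ [b]) + partial_avg k n f (xs @ [b + k]))"
    have V: "?V $ c = 2 * ((\<Sum>b\<in>{1..r}. pair_avg xs b (Some (c, True)) - pair_avg xs b (Some (c, False)))
       - (\<Sum>b\<in>{r+1..k}. pair_avg xs b (Some (c, True)) - pair_avg xs b (Some (c, False))))" for c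
    proof -
      have "partial_avg k n f (xs @ [b]) $ c + partial_avg k n f (xs @ [b + k]) $ c
          = 2 * (pair_avg xs b (Some (c, True)) - pair_avg xs b (Some (c, False)))" for b
        by (simp add: partial_avg_nth pair_avg_def algebra_simps)
      then show ?thesis
        by (simp add: sum_distrib_left right_diff_distrib)
    qed
    have "1 - \<epsilon> \<le> 1 / (2 * real k) * l1norm ?V"
      using split[of "Suc l" xs r] xs r \<open>l < n\<close> by simp
    also have "l1norm ?V = 2 * (\<Sum>c\<in>UNIV.
      \<bar>(\<Sum>b\<in>{1..r}. pair_avg xs b (Some (c, True)) - pair_avg xs b (Some (c, False)))
       - (\<Sum>b\<in>{r+1..k}. pair_avg xs b (Some (c, True)) - pair_avg xs b (Some (c, False)))\<bar>)"
      unfolding l1norm_def V by (simp only: abs_mult abs_numeral sum_distrib_left)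
    finally show ?thesis
      using k_ge_2 by (simp add: field_simps)
  qed
qed

lemma delta_nonneg:
  assumes "n \<ge> 1"
  shows "0 \<le> \<delta>"
proof -
  have "pair_avg [] (best_pair [] q) q \<le> (\<Sum>b\<in>{1..k}. pair_avg [] b q)" for q
    using assms best_pair_in owner_avg_nonneg[of "[_]" 1]
    by (intro member_le_sum) (auto simp: pair_avg_def tuples_def)
  then have "0 \<le> level_loss []"
    unfolding level_loss_def by (simp add: sum_nonneg)
  also have "\<dots> \<le> real k * \<delta>"
    using assms by (intro level_loss_le[of _ 0]) auto
  finally show ?thesis
    using k_ge_2 by (simp add: zero_le_mult_iff)
qed

lemma sum_completions_owner_weight:
  assumes "length xs + Suc j = n"
  shows "(\<Sum>ys\<in>tuples (2*k) j. owner_weight (f (xs @ a # ys)) q)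
       = (2 * real k) ^ j * owner_avg (xs @ [a]) q"
proof -
  have "n - length (xs @ [a]) = j"
    using assms by simp
  then show ?thesis
    using k_ge_2 by (simp add: owner_avg_def)
qed

lemma sum_off_best_pair:
  "(\<Sum>a\<in>{1..2*k}. if a \<in> {best_pair xs q, best_pair xs q + k} then 0 else owner_avg (xs @ [a]) q)
     = 2 * ((\<Sum>b\<in>{1..k}. pair_avg xs b q) - pair_avg xs (best_pair xs q) q)"
proof -
  have "2 * pair_avg xs b q = owner_avg (xs @ [b]) q + owner_avg (xs @ [b + k]) q" for b
    by (simp add: pair_avg_def)
  then show ?thesis
    by (simp only: sum_off_pair[OF best_pair_in] right_diff_distrib sum_distrib_left)
qed

lemma owner_mass_off_best_pair_le:
  assumes "l < n"
  shows "(\<Sum>x\<in>tuples (2*k) n. \<Sum>q\<in>UNIV. owner_weight (f x) q *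
            (if x ! l \<in> {best_pair (take l x) q, best_pair (take l x) q + k} then 0 else 1))
         \<le> (2 * real k) ^ n * \<delta>"
proof -
  define j where "j = n - Suc l"
  have n: "n = l + Suc j"
    using assms by (simp add: j_def)
  define off where "off xs a q = (if a \<in> {best_pair xs q, best_pair xs q + k} then 0 else 1 :: real)"
    for xs a q
  have node: "(\<Sum>a\<in>{1..2*k}. \<Sum>ys\<in>tuples (2*k) j. \<Sum>q\<in>UNIV. owner_weight (f (xs @ a # ys)) q * off xs a q)
      = 2 * (2 * real k) ^ j * level_loss xs" if "xs \<in> tuples (2*k) l" for xs
  proof -
    have len: "length xs + Suc j = n"
      using that n by (simp add: length_tuples)
    have "(\<Sum>a\<in>{1..2*k}. \<Sum>ys\<in>tuples (2*k) j. \<Sum>q\<in>UNIV. owner_weight (f (xs @ a # ys)) q * off xs a q)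
        = (\<Sum>a\<in>{1..2*k}. \<Sum>q\<in>UNIV. off xs a q * (\<Sum>ys\<in>tuples (2*k) j. owner_weight (f (xs @ a # ys)) q))"
      by (rule sum.cong[OF refl], subst sum.swap) (simp add: sum_distrib_left mult.commute)
    also have "\<dots> = (\<Sum>a\<in>{1..2*k}. \<Sum>q\<in>UNIV. off xs a q * ((2 * real k) ^ j * owner_avg (xs @ [a]) q))"
      by (simp add: sum_completions_owner_weight[OF len])
    also have "\<dots> = (\<Sum>q\<in>UNIV. (2 * real k) ^ j * (\<Sum>a\<in>{1..2*k}. off xs a q * owner_avg (xs @ [a]) q))"
      by (subst sum.swap) (simp add: sum_distrib_left mult_ac)
    also have "\<dots> = 2 * (2 * real k) ^ j * level_loss xs"
    proof -
      have off_sum: "(\<Sum>a\<in>{1..2*k}. off xs a q * owner_avg (xs @ [a]) q)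
          = 2 * ((\<Sum>b\<in>{1..k}. pair_avg xs b q) - pair_avg xs (best_pair xs q) q)" for q
        unfolding sum_off_best_pair[symmetric] by (rule sum.cong) (simp_all add: off_def)
      show ?thesis
        unfolding level_loss_def sum_distrib_left[where r = "2 * (2 * real k) ^ j"] off_sum
        by (simp only: mult.assoc mult.left_commute)
    qed
    finally show ?thesis .
  qed
  have "(\<Sum>x\<in>tuples (2*k) n. \<Sum>q\<in>UNIV. owner_weight (f x) q *
            (if x ! l \<in> {best_pair (take l x) q, best_pair (take l x) q + k} then 0 else 1))
      = (\<Sum>xs\<in>tuples (2*k) l. \<Sum>a\<in>{1..2*k}. \<Sum>ys\<in>tuples (2*k) j.
            \<Sum>q\<in>UNIV. owner_weight (f (xs @ a # ys)) q * off xs a q)"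
    unfolding sum_tuples_add[where i = l and j = "Suc j", folded n] sum_tuples_Suc
    by (intro sum.cong refl) (simp add: off_def length_tuples nth_append del: insert_iff)
  also have "\<dots> \<le> (\<Sum>xs\<in>tuples (2*k) l. 2 * (2 * real k) ^ j * (real k * \<delta>))"
  proof (rule sum_mono)
    fix xs
    assume xs: "xs \<in> tuples (2*k) l"
    show "(\<Sum>a\<in>{1..2*k}. \<Sum>ys\<in>tuples (2*k) j. \<Sum>q\<in>UNIV. owner_weight (f (xs @ a # ys)) q * off xs a q)
        \<le> 2 * (2 * real k) ^ j * (real k * \<delta>)"
      unfolding node[OF xs] by (intro mult_left_mono level_loss_le[OF xs \<open>l < n\<close>]) simp
  qed
  also have "\<dots> = (2 * real k) ^ n * \<delta>"
    by (simp add: n power_add algebra_simps)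
  finally show ?thesis .
qed

definition misses :: "'d owner \<Rightarrow> nat list \<Rightarrow> nat" where
  "misses q = pair_misses k (\<lambda>ys. best_pair ys q)"

lemma expected_misses_le:
  "(\<Sum>x\<in>tuples (2*k) n. \<Sum>q\<in>UNIV. owner_weight (f x) q * real (misses q x))
     \<le> real n * \<delta> * (2 * real k) ^ n"
proof -
  have "(\<Sum>x\<in>tuples (2*k) n. \<Sum>q\<in>UNIV. owner_weight (f x) q * real (misses q x))
     = (\<Sum>l<n. \<Sum>x\<in>tuples (2*k) n. \<Sum>q\<in>UNIV. owner_weight (f x) q *
          (if x ! l \<in> {best_pair (take l x) q, best_pair (take l x) q + k} then 0 else 1))"
  proof -
    have "owner_weight (f x) q * real (misses q x) = (\<Sum>l<n. owner_weight (f x) q *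
          (if x ! l \<in> {best_pair (take l x) q, best_pair (take l x) q + k} then 0 else 1))"
      if "x \<in> tuples (2*k) n" for x q
    proof -
      have "real (if P then 0 else 1) = (if P then 0 else 1)" for P
        by simp
      with that show ?thesis
        by (simp add: misses_def pair_misses_def length_tuples sum_distrib_left of_nat_sum del: insert_iff)
    qed
    then show ?thesis
      by (simp add: sum.swap[of _ UNIV "{..<n}"] sum.swap[of _ "tuples (2*k) n" "{..<n}"])
  qed
  also have "\<dots> \<le> (\<Sum>l<n. (2 * real k) ^ n * \<delta>)"
    by (intro sum_mono owner_mass_off_best_pair_le) simp
  finally show ?thesis
    by (simp add: mult_ac)
qed

lemma owner_count_bound:
  assumes "0 < \<theta>" "\<theta> \<le> 1"
  shows "(2 * real k) ^ n * \<theta> powr (real n * \<delta>)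
       \<le> real (2 * CARD('d) + 1) * (2 + 2 * (real k - 1) * \<theta>) ^ n"
proof -
  let ?A = "tuples (2*k) n \<times> (UNIV :: 'd owner set)"
  let ?w = "\<lambda>(x, q). owner_weight (f x) q"
  let ?D = "\<lambda>(x, q). misses q x"
  have w_nonneg: "0 \<le> owner_weight (f x) q" and w_le_1: "owner_weight (f x) q \<le> 1"
    if "x \<in> tuples (2*k) n" for x q
    using that by (auto intro!: owner_weight_nonneg owner_weight_le_1 bounded)
  have sum_A: "(\<Sum>a\<in>?A. h a) = (\<Sum>x\<in>tuples (2*k) n. \<Sum>q\<in>UNIV. h (x, q))" for h :: "_ \<Rightarrow> real"
    by (simp add: sum.cartesian_product)
  have total: "(\<Sum>a\<in>?A. ?w a) = (2 * real k) ^ n"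
    by (simp add: sum_A sum_owner_weight)
  have "\<theta> powr (real n * \<delta>) * (\<Sum>a\<in>?A. ?w a) \<le> (\<Sum>a\<in>?A. ?w a * \<theta> ^ ?D a)"
  proof (rule weighted_power_ge_powr)
    show "(\<Sum>a\<in>?A. ?w a * real (?D a)) \<le> real n * \<delta> * (\<Sum>a\<in>?A. ?w a)"
      using expected_misses_le unfolding total by (simp only: sum_A prod.case)
  qed (auto simp: assms intro: w_nonneg)
  also have "\<dots> \<le> (\<Sum>a\<in>?A. \<theta> ^ ?D a)"
    using assms w_nonneg w_le_1 by (intro sum_mono mult_left_le_one_le) auto
  also have "\<dots> = (\<Sum>q\<in>UNIV. \<Sum>x\<in>tuples (2*k) n. \<theta> ^ misses q x)"
    by (simp only: sum_A prod.case sum.swap[of _ "tuples (2*k) n"])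
  also have "\<dots> = real (2 * CARD('d) + 1) * (2 + 2 * (real k - 1) * \<theta>) ^ n"
    by (simp add: misses_def sum_power_pair_misses[OF best_pair_in])
  finally show ?thesis
    unfolding total by (simp only: mult.commute)
qed

lemma k_power_le_card_owners:
  assumes "\<delta> = 0"
  shows "real k ^ n \<le> real (2 * CARD('d) + 1)"
proof -
  \<comment> \<open>Let \<open>\<theta> \<rightarrow> 0\<close> in \<open>owner_count_bound\<close>, whose left-hand side no longer depends on \<open>\<theta>\<close>.\<close>
  define g where "g \<theta> = real (2 * CARD('d) + 1) * (2 + 2 * (real k - 1) * \<theta>) ^ n" for \<theta>
  have "(g \<longlongrightarrow> g 0) (at_right 0)"
    unfolding g_def by (intro tendsto_intros)
  moreover have "\<forall>\<^sub>F \<theta> in at_right 0. \<theta> \<in> {0<..<1::real}"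
    by (rule eventually_at_right_real) simp
  then have "\<forall>\<^sub>F \<theta> in at_right 0. (2 * real k) ^ n \<le> g \<theta>"
    by eventually_elim (use owner_count_bound assms in \<open>auto simp: g_def\<close>)
  ultimately have "(2 * real k) ^ n \<le> g 0"
    by (rule tendsto_lowerbound) simp
  then show ?thesis
    by (simp add: g_def power_mult_distrib)
qed

lemma entropy_bound:
  assumes "n \<ge> 1" "\<delta> < 1 / 2"
  shows "2 powr ((log 2 k - \<delta> * log 2 (real k - 1) - bin_entropy \<delta>) * real n)
       \<le> real (2 * CARD('d) + 1)"
proof (cases "\<delta> = 0")
  case True
  then show ?thesis
    using k_power_le_card_owners k_ge_2
    by (simp add: bin_entropy_def powr_realpow flip: powr_powr)
next
  case False
  then have \<delta>: "0 < \<delta>" "\<delta> < 1 / 2"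
    using delta_nonneg assms by linarith+
  have K: "2 \<le> real k"
    using k_ge_2 by simp
  define \<theta> where "\<theta> = \<delta> / ((1 - \<delta>) * (real k - 1))"
  note \<theta> = entropy_exponent_identity[OF K \<delta>, folded \<theta>_def]
  have "2 powr ((log 2 k - \<delta> * log 2 (real k - 1) - bin_entropy \<delta>) * real n) * (2 / (1 - \<delta>)) ^ n
      \<le> real (2 * CARD('d) + 1) * (2 / (1 - \<delta>)) ^ n"
    using owner_count_bound[OF \<theta>(1,2)] by (simp only: \<theta>(3,4))
  then show ?thesis
    using \<delta> by simp
qed

end

theorem theorem2:
  fixes k n :: nat and \<epsilon> :: real and f :: "nat list \<Rightarrow> real ^ 'd"
  assumes "k \<ge> 2" and "n \<ge> 1"
    and bounded: "\<And>xs. xs \<in> tuples (2*k) n \<Longrightarrow> l1norm (f xs) \<le> 1"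
    and eps: "\<epsilon> < 1 / (real k - 1)"
    and hyp: "\<And>l xs r. l \<in> {1..n} \<Longrightarrow> xs \<in> tuples (2*k) (l - 1) \<Longrightarrow> r \<in> {1..k-1} \<Longrightarrow>
       1 / (2 * real k) * l1norm
         ((\<Sum>b\<in>{1..r}. partial_avg k n f (xs @ [b]) + partial_avg k n f (xs @ [b + k]))
          - (\<Sum>b\<in>{r+1..k}. partial_avg k n f (xs @ [b]) + partial_avg k n f (xs @ [b + k])))
       \<ge> 1 - \<epsilon>"
  shows "let \<delta> = (real k - 1) * \<epsilon> / 2 in
         real CARD('d) \<ge>
           2 powr ((log 2 k - \<delta> * log 2 (real k - 1) - bin_entropy \<delta>) * real n - 1) - 1 / 2"
proof -
  interpret pair_splitting k n \<epsilon> f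
    using assms by unfold_locales auto
  have "(real k - 1) * \<epsilon> < 1"
    using eps \<open>k \<ge> 2\<close> by (simp add: field_simps)
  then have "2 powr ((log 2 k - \<delta> * log 2 (real k - 1) - bin_entropy \<delta>) * real n)
      \<le> real (2 * CARD('d) + 1)"
    using \<open>n \<ge> 1\<close> by (intro entropy_bound) auto
  then show ?thesis
    by (simp add: Let_def powr_diff)
qed

end
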